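(* Let $K\ge 2$, let $q=(q(1),\dots,q(K))$ be a label distribution and $p=(p(1),\dots,p(K))$ a model's predicted distribution on $\{1,\dots,K\}$, both with strictly positive entries, and let $\alpha\in[0,1]$. Define the self-guided soft label $q'=(1-\alpha)q+\alpha p$ and the loss $\ell_{sglr}=\mathcal{H}(q',p)$. Define the symmetric cross-entropy loss with weights summing to $1$, $\ell_{sce}=(1-\alpha)\,\mathcal{H}(q,p)+\alpha\,\mathcal{H}(p,q)$, and the reverse KL term $\ell_{rkl}=D_{\mathrm{KL}}(p\,\|\,q)$. Then $$\ell_{sglr}=\ell_{sce}-\alpha\,\ell_{rkl}.$$
   Context: $\mathcal{H}(a,b)=-\sum_{k=1}^K a(k)\log b(k)$ is the cross-entropy, $\mathcal{H}(a)=\mathcal{H}(a,a)$ the entropy, and $D_{\mathrm{KL}}(a\,\|\,b)=\sum_k a(k)\log\frac{a(k)}{b(k)}$. $\mathcal{H}(q,p)$ is the cross-entropy (CE) loss and $\mathcal{H}(p,q)$ the reverse cross-entropy (RCE) loss. *)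

theory Defs
  imports Complex_Main
begin

definition cross_entropy :: "nat \<Rightarrow> (nat \<Rightarrow> real) \<Rightarrow> (nat \<Rightarrow> real) \<Rightarrow> real" where
  "cross_entropy K a b = - (\<Sum>k=1..K. a k * ln (b k))"

definition entropy :: "nat \<Rightarrow> (nat \<Rightarrow> real) \<Rightarrow> real" where
  "entropy K a = cross_entropy K a a"

definition kl_div :: "nat \<Rightarrow> (nat \<Rightarrow> real) \<Rightarrow> (nat \<Rightarrow> real) \<Rightarrow> real" where
  "kl_div K a b = (\<Sum>k=1..K. a k * ln (a k / b k))"

definition is_prob_dist :: "nat \<Rightarrow> (nat \<Rightarrow> real) \<Rightarrow> bool" where
  "is_prob_dist K a \<longleftrightarrow> (\<forall>k\<in>{1..K}. a k \<ge> 0) \<and> (\<Sum>k=1..K. a k) = 1"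

end

theory Submission
  imports Defs
begin

(* Cross entropy is linear in its first argument, so the self-guided loss splits as
   (1 - \<alpha>) H(q,p) + \<alpha> H(p); and for positive entries H(p,q) - D_KL(p || q) = H(p). *)

lemma cross_entropy_linear_left:
  "cross_entropy K (\<lambda>k. s * a k + t * b k) c = s * cross_entropy K a c + t * cross_entropy K b c"
  unfolding cross_entropy_def
  by (simp add: algebra_simps sum.distrib sum_distrib_left)

lemma kl_div_eq_cross_entropy_minus_entropy:
  assumes "\<forall>k\<in>{1..K}. a k > 0" and "\<forall>k\<in>{1..K}. b k > 0"
  shows "kl_div K a b = cross_entropy K a b - entropy K a"
proof -
  have "kl_div K a b = (\<Sum>k=1..K. a k * ln (a k) - a k * ln (b k))"
    unfolding kl_div_def
  proof (rule sum.cong[OF refl])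
    fix k assume "k \<in> {1..K}"
    with assms have "a k > 0" "b k > 0" by auto
    then show "a k * ln (a k / b k) = a k * ln (a k) - a k * ln (b k)"
      by (simp add: ln_div right_diff_distrib)
  qed
  then show ?thesis
    unfolding entropy_def cross_entropy_def
    by (simp add: sum_subtractf)
qed

theorem proposition1:
  fixes K :: nat and q p :: "nat \<Rightarrow> real" and \<alpha> :: real
  assumes "K \<ge> 2"
    and "is_prob_dist K q" and "is_prob_dist K p"
    and "\<forall>k\<in>{1..K}. q k > 0" and "\<forall>k\<in>{1..K}. p k > 0"
    and "0 \<le> \<alpha>" and "\<alpha> \<le> 1"
  shows "let q' = (\<lambda>k. (1 - \<alpha>) * q k + \<alpha> * p k);
             l_sglr = cross_entropy K q' p;
             l_sce = (1 - \<alpha>) * cross_entropy K q p + \<alpha> * cross_entropy K p q;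
             l_rkl = kl_div K p q
         in l_sglr = l_sce - \<alpha> * l_rkl"
proof -
  have sglr: "cross_entropy K (\<lambda>k. (1 - \<alpha>) * q k + \<alpha> * p k) p
      = (1 - \<alpha>) * cross_entropy K q p + \<alpha> * entropy K p"
    by (simp add: cross_entropy_linear_left entropy_def)
  have rkl: "kl_div K p q = cross_entropy K p q - entropy K p"
    using assms(5,4) by (rule kl_div_eq_cross_entropy_minus_entropy)
  show ?thesis
    unfolding Let_def sglr rkl by (simp add: algebra_simps)
qed

end
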